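(* Let $p\in(0,1)$ and let $(\lambda_n)_{n\ge1}$ be a sequence with $\lambda_1=1$ and $0\le\lambda_n\le\lambda_{n-1}$ for all $n>1$. Let $r_1,r_2,\dots$ be $\{0,1\}$-valued random variables with $\Pr(r_1=1)=p$ and, for every $n\ge2$, $\Pr(r_n=1\mid r_1,\dots,r_{n-1})=\lambda_n p+(1-\lambda_n)\bar p_{n-1}$, where $\bar p_m=\frac1m\sum_{i=1}^m r_i$. If $\bar p_n$ is consistent, i.e. $\lim_{n\to\infty}\Pr(|\bar p_n-p|>\epsilon)=0$ for every $\epsilon>0$, then $\lim_{n\to\infty}\sum_{i=1}^n\lambda_i^2=\infty$. *)

theory Defs
  imports "HOL-Probability.Probability"
begin

definition pbar :: "(nat \<Rightarrow> 'a \<Rightarrow> real) \<Rightarrow> nat \<Rightarrow> 'a \<Rightarrow> real" where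
  "pbar r m \<omega> = (\<Sum>i=1..m. r i \<omega>) / real m"

definition hist_event :: "'a measure \<Rightarrow> (nat \<Rightarrow> 'a \<Rightarrow> real) \<Rightarrow> nat \<Rightarrow> (nat \<Rightarrow> real) \<Rightarrow> 'a set" where
  "hist_event M r m x = {\<omega> \<in> space M. \<forall>i\<in>{1..m}. r i \<omega> = x i}"

end

theory Submission
  imports Defs
begin

(* Write S_n = r_1 + ... + r_n. Given the history up to time n, the next draw succeeds with
   probability q_n = lam_(n+1) p + (1 - lam_(n+1)) S_n / n, and q_n - p = (1 - lam_(n+1)) (S_n - n p) / n.
   Conditioning on the history therefore gives
     E[(S_(n+1) - (n+1) p)^2] = ((n + 1 - lam_(n+1)) / n)^2 E[(S_n - n p)^2] + E[q_n (1 - q_n)],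
   so the mean square error E[(pbar_n - p)^2] shrinks in each step at most by the factor
   (1 - lam_(n+1) / (n+1))^2. It starts at p (1 - p) for n = 1, and 1 - x >= exp (-2 x) together with
   lam_k / k <= (lam_k^2 + 1 / k^2) / 2 keep it above p (1 - p) exp (-2 (lam_1^2 + ... + lam_n^2 + 2)).
   Consistency and |pbar_n - p| <= 1 force the mean square error to 0, so the sum of the lam_k^2
   diverges. *)

lemma exp_minus_two_le_one_minus:
  fixes x :: real
  assumes "0 \<le> x" "x \<le> 1/2"
  shows "exp (-2 * x) \<le> 1 - x"
proof -
  have "-2 * x \<le> - x - 2 * x\<^sup>2"
    using mult_left_mono[of "2 * x" 1 x] assms by (simp add: power2_eq_square)
  also have "\<dots> \<le> ln (1 - x)"
    using assms by (rule ln_one_minus_pos_lower_bound)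
  finally show ?thesis
    using assms by (simp add: ln_ge_iff)
qed

lemma sum_inverse_squares_le:
  assumes "n \<ge> 1"
  shows "(\<Sum>k=1..n. 1 / (real k)\<^sup>2) \<le> 2 - 1 / real n"
  using assms
proof (induction n rule: dec_induct)
  case base
  then show ?case by simp
next
  case (step n)
  have "1 / (real (Suc n))\<^sup>2 \<le> 1 / (real n * real (Suc n))"
    using step.hyps by (intro divide_left_mono) (auto simp: power2_eq_square intro!: mult_right_mono)
  also have "\<dots> = 1 / real n - 1 / real (Suc n)"
    using step.hyps by (simp add: field_simps)
  finally show ?case
    using step.IH by (simp add: sum.cl_ivl_Suc)
qed

lemma exp_sum_squares_le_prod:
  fixes lam :: "nat \<Rightarrow> real"
  assumes lam_bounds: "\<And>k. k \<ge> 1 \<Longrightarrow> 0 \<le> lam k \<and> lam k \<le> 1" and "n \<ge> 1"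
  shows "exp (-2 * ((\<Sum>k=1..n. (lam k)\<^sup>2) + 2)) \<le> (\<Prod>k=2..n. (1 - lam k / real k)\<^sup>2)"
proof -
  define a where "a k = lam k / real k" for k
  have a_nonneg: "0 \<le> a k" if "k \<ge> 1" for k
    using lam_bounds[OF that] by (simp add: a_def)
  have a_le_half: "a k \<le> 1/2" if "k \<ge> 2" for k
    using lam_bounds[of k] that by (simp add: a_def field_simps)
  have "(\<Sum>k=2..n. a k) \<le> (\<Sum>k=1..n. a k)"
    using a_nonneg by (intro sum_mono2) auto
  also have "\<dots> \<le> (\<Sum>k=1..n. ((lam k)\<^sup>2 + (1 / real k)\<^sup>2) / 2)"
  proof (intro sum_mono)
    fix k
    show "a k \<le> ((lam k)\<^sup>2 + (1 / real k)\<^sup>2) / 2"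
      using sum_squares_bound[of "lam k" "1 / real k"] by (simp add: a_def mult.commute)
  qed
  also have "\<dots> \<le> ((\<Sum>k=1..n. (lam k)\<^sup>2) + 2) / 2"
  proof -
    have "0 \<le> 1 / real n"
      by simp
    then have "(\<Sum>k=1..n. 1 / (real k)\<^sup>2) \<le> 2"
      using sum_inverse_squares_le[OF \<open>n \<ge> 1\<close>] by linarith
    then show ?thesis
      by (simp add: sum_divide_distrib[symmetric] sum.distrib power_divide)
  qed
  finally have "exp (-2 * ((\<Sum>k=1..n. (lam k)\<^sup>2) + 2)) \<le> exp (\<Sum>k=2..n. -4 * a k)"
    by (simp add: sum_negf sum_distrib_left[symmetric])
  also have "\<dots> = (\<Prod>k=2..n. (exp (-2 * a k))\<^sup>2)"
    by (simp add: exp_sum power2_eq_square exp_add[symmetric])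
  also have "\<dots> \<le> (\<Prod>k=2..n. (1 - a k)\<^sup>2)"
    using a_nonneg a_le_half exp_minus_two_le_one_minus
    by (intro prod_mono conjI power_mono) auto
  finally show ?thesis
    by (simp add: a_def)
qed

lemma recurrence_prod_lower_bound:
  fixes b c :: "nat \<Rightarrow> real"
  assumes "\<And>k. m \<le> k \<Longrightarrow> 0 \<le> c (Suc k)"
    and "\<And>k. m \<le> k \<Longrightarrow> c (Suc k) * b k \<le> b (Suc k)"
    and "m \<le> n"
  shows "b m * (\<Prod>k=Suc m..n. c k) \<le> b n"
  using \<open>m \<le> n\<close>
proof (induction n rule: dec_induct)
  case base
  then show ?case by simp
next
  case (step n)
  have "b m * (\<Prod>k=Suc m..Suc n. c k) = c (Suc n) * (b m * (\<Prod>k=Suc m..n. c k))"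
    using step.hyps by (simp add: prod.cl_ivl_Suc)
  also have "\<dots> \<le> c (Suc n) * b n"
    using step.IH assms(1) step.hyps by (intro mult_left_mono) auto
  also have "\<dots> \<le> b (Suc n)"
    using assms(2) step.hyps by simp
  finally show ?case .
qed

lemma sum_weighted_square_le_threshold:
  fixes w g :: "'a \<Rightarrow> real"
  assumes "finite X" "\<And>x. x \<in> X \<Longrightarrow> 0 \<le> w x" "(\<Sum>x\<in>X. w x) = 1"
    and "\<And>x. x \<in> X \<Longrightarrow> \<bar>g x\<bar> \<le> 1"
  shows "(\<Sum>x\<in>X. w x * (g x)\<^sup>2) \<le> \<epsilon>\<^sup>2 + (\<Sum>x\<in>{x\<in>X. \<bar>g x\<bar> > \<epsilon>}. w x)"
proof -
  have "w x * (g x)\<^sup>2 \<le> \<epsilon>\<^sup>2 * w x + (if \<bar>g x\<bar> > \<epsilon> then w x else 0)" if "x \<in> X" for x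
  proof (cases "\<bar>g x\<bar> > \<epsilon>")
    case True
    have "(g x)\<^sup>2 \<le> 1"
      using assms(4)[OF that] by (simp add: abs_le_square_iff[of "g x" 1, simplified])
    then show ?thesis
      using True assms(2)[OF that] by (simp add: mult_left_le add_increasing)
  next
    case False
    then have "\<bar>g x\<bar> \<le> \<bar>\<epsilon>\<bar>"
      by linarith
    then have "(g x)\<^sup>2 \<le> \<epsilon>\<^sup>2"
      by (simp add: abs_le_square_iff)
    then show ?thesis
      using False assms(2)[OF that] by (simp add: mult.commute mult_left_mono)
  qed
  then have "(\<Sum>x\<in>X. w x * (g x)\<^sup>2) \<le> (\<Sum>x\<in>X. \<epsilon>\<^sup>2 * w x + (if \<bar>g x\<bar> > \<epsilon> then w x else 0))"
    by (rule sum_mono)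
  also have "\<dots> = \<epsilon>\<^sup>2 + (\<Sum>x\<in>{x\<in>X. \<bar>g x\<bar> > \<epsilon>}. w x)"
    using assms(1,3) by (simp add: sum.distrib sum_distrib_left[symmetric] sum.inter_filter)
  finally show ?thesis .
qed

lemma antitone_from_one_bounds:
  fixes f :: "nat \<Rightarrow> real"
  assumes "\<And>n. n > 1 \<Longrightarrow> 0 \<le> f n \<and> f n \<le> f (n - 1)" "f 1 = 1" "n \<ge> 1"
  shows "0 \<le> f n \<and> f n \<le> 1"
  using \<open>n \<ge> 1\<close>
proof (induction n rule: dec_induct)
  case (step n)
  then show ?case
    using assms(1)[of "Suc n"] by auto
qed (use assms(2) in simp)

(* Extensional, so that each 0/1 pattern on {1..n} has exactly one representative. *)
definition binary_histories :: "nat \<Rightarrow> (nat \<Rightarrow> real) set" where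
  "binary_histories n = {1..n} \<rightarrow>\<^sub>E {0, 1}"

lemma finite_binary_histories: "finite (binary_histories n)"
  unfolding binary_histories_def by (intro finite_PiE) auto

lemma sum_binary_histories_Suc:
  "(\<Sum>z\<in>binary_histories (Suc n). f z) =
     (\<Sum>x\<in>binary_histories n. f (x(Suc n := 0)) + f (x(Suc n := 1)))"
proof -
  have interval_Suc: "{1..Suc n} = insert (Suc n) {1..n}"
    by auto
  have "(\<Sum>z\<in>binary_histories (Suc n). f z) =
      (\<Sum>(b, x)\<in>{0, 1} \<times> binary_histories n. f (x(Suc n := b)))"
    unfolding binary_histories_def interval_Suc PiE_insert_eq
    by (subst sum.reindex[OF inj_combinator]) (auto simp: case_prod_unfold)
  also have "\<dots> = (\<Sum>x\<in>binary_histories n. f (x(Suc n := 0)) + f (x(Suc n := 1)))"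
    by (simp add: sum.cartesian_product[symmetric] sum.distrib)
  finally show ?thesis .
qed

lemma sum_fun_upd_Suc: "(\<Sum>i=1..Suc n. (x(Suc n := b)) i) = (\<Sum>i=1..n. x i) + b"
  by (simp add: sum.cl_ivl_Suc)

lemma binary_history_mean_bounds:
  assumes "x \<in> binary_histories n"
  shows "0 \<le> (\<Sum>i=1..n. x i) / real n" "(\<Sum>i=1..n. x i) / real n \<le> 1"
proof -
  have x01: "0 \<le> x i \<and> x i \<le> 1" if "i \<in> {1..n}" for i
  proof -
    have "x i \<in> {0, 1}"
      using assms that by (auto simp: binary_histories_def PiE_iff)
    then show ?thesis by auto
  qed
  then have "0 \<le> (\<Sum>i=1..n. x i)"
    by (intro sum_nonneg) auto
  then show "0 \<le> (\<Sum>i=1..n. x i) / real n"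
    by simp
  have "(\<Sum>i=1..n. x i) \<le> real n"
    using sum_mono[of "{1..n}" x "\<lambda>_. 1"] x01 by simp
  then show "(\<Sum>i=1..n. x i) / real n \<le> 1"
    by (simp add: divide_le_eq)
qed

locale binary_process = prob_space M for M :: "'a measure" +
  fixes r :: "nat \<Rightarrow> 'a \<Rightarrow> real" and q :: "nat \<Rightarrow> (nat \<Rightarrow> real) \<Rightarrow> real"
  assumes measurable_r: "\<And>i. i \<ge> 1 \<Longrightarrow> r i \<in> borel_measurable M"
    and r_binary: "\<And>i \<omega>. i \<ge> 1 \<Longrightarrow> \<omega> \<in> space M \<Longrightarrow> r i \<omega> \<in> {0, 1}"
    and prob_next_one: "\<And>n x. x \<in> binary_histories n \<Longrightarrow>
      prob (hist_event M r n x \<inter> {\<omega> \<in> space M. r (Suc n) \<omega> = 1}) = q n x * prob (hist_event M r n x)"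
begin

definition history :: "nat \<Rightarrow> 'a \<Rightarrow> nat \<Rightarrow> real" where
  "history n \<omega> = (\<lambda>i\<in>{1..n}. r i \<omega>)"

definition hist_prob :: "nat \<Rightarrow> (nat \<Rightarrow> real) \<Rightarrow> real" where
  "hist_prob n x = prob (hist_event M r n x)"

lemma sets_r_eq: "i \<ge> 1 \<Longrightarrow> {\<omega> \<in> space M. r i \<omega> = c} \<in> events"
  using measurable_r[of i] by measurable

lemma sets_hist_event: "hist_event M r n x \<in> events"
  unfolding hist_event_def by (intro sets.sets_Collect_finite_All) (auto intro: sets_r_eq)

lemma hist_prob_nonneg: "0 \<le> hist_prob n x"
  by (simp add: hist_prob_def)

lemma history_in_binary_histories: "\<omega> \<in> space M \<Longrightarrow> history n \<omega> \<in> binary_histories n"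
  unfolding history_def binary_histories_def using r_binary by auto

lemma hist_event_eq_history:
  "x \<in> binary_histories n \<Longrightarrow> hist_event M r n x = {\<omega> \<in> space M. history n \<omega> = x}"
  unfolding hist_event_def history_def binary_histories_def
  by (auto simp: PiE_iff extensional_def)

lemma prob_history_eq_sum:
  "prob {\<omega> \<in> space M. \<Phi> (history n \<omega>)} = (\<Sum>x\<in>{x \<in> binary_histories n. \<Phi> x}. hist_prob n x)"
proof -
  have "{\<omega> \<in> space M. \<Phi> (history n \<omega>)} = (\<Union>x\<in>{x \<in> binary_histories n. \<Phi> x}. hist_event M r n x)"
    using history_in_binary_histories by (auto simp: hist_event_eq_history)
  moreover have "disjoint_family_on (hist_event M r n) {x \<in> binary_histories n. \<Phi> x}"
    by (auto simp: disjoint_family_on_def hist_event_eq_history)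
  ultimately show ?thesis
    unfolding hist_prob_def using finite_binary_histories sets_hist_event
    by (auto intro: finite_measure_finite_Union)
qed

lemma sum_hist_prob: "(\<Sum>x\<in>binary_histories n. hist_prob n x) = 1"
  using prob_history_eq_sum[of "\<lambda>_. True" n] by (simp add: prob_space)

lemma hist_event_Suc:
  "hist_event M r (Suc n) (x(Suc n := b)) = hist_event M r n x \<inter> {\<omega> \<in> space M. r (Suc n) \<omega> = b}"
  unfolding hist_event_def by (auto simp: le_Suc_eq)

lemma hist_prob_Suc_one:
  "x \<in> binary_histories n \<Longrightarrow> hist_prob (Suc n) (x(Suc n := 1)) = q n x * hist_prob n x"
  by (simp add: hist_prob_def hist_event_Suc prob_next_one)

lemma hist_prob_Suc_zero:
  assumes "x \<in> binary_histories n"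
  shows "hist_prob (Suc n) (x(Suc n := 0)) = (1 - q n x) * hist_prob n x"
proof -
  have "hist_event M r n x \<inter> {\<omega> \<in> space M. r (Suc n) \<omega> = 0} =
      hist_event M r n x - (hist_event M r n x \<inter> {\<omega> \<in> space M. r (Suc n) \<omega> = 1})"
    using r_binary[of "Suc n"] unfolding hist_event_def by fastforce
  then show ?thesis
    using prob_next_one[OF assms] sets_hist_event
    by (simp add: hist_prob_def hist_event_Suc finite_measure_Diff sets.Int sets_r_eq left_diff_distrib)
qed

lemma sum_hist_prob_Suc:
  "(\<Sum>z\<in>binary_histories (Suc n). hist_prob (Suc n) z * f z) =
     (\<Sum>x\<in>binary_histories n. hist_prob n x *
        (q n x * f (x(Suc n := 1)) + (1 - q n x) * f (x(Suc n := 0))))"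
  unfolding sum_binary_histories_Suc
  by (intro sum.cong) (simp_all add: hist_prob_Suc_one hist_prob_Suc_zero algebra_simps)

lemma hist_prob_mult_variance_nonneg:
  assumes "x \<in> binary_histories n"
  shows "0 \<le> hist_prob n x * (q n x * (1 - q n x))"
proof -
  have "0 \<le> (q n x * hist_prob n x) * ((1 - q n x) * hist_prob n x)"
    using hist_prob_nonneg[of "Suc n"] assms
    by (simp add: hist_prob_Suc_one[symmetric] hist_prob_Suc_zero[symmetric])
  then have product_nonneg: "0 \<le> hist_prob n x * (hist_prob n x * (q n x * (1 - q n x)))"
    by (simp add: ac_simps)
  show ?thesis
  proof (cases "hist_prob n x = 0")
    case False
    then have "0 < hist_prob n x"
      using hist_prob_nonneg[of n x] by simp
    then show ?thesis
      using product_nonneg mult_le_cancel_left_pos[of "hist_prob n x" 0] by simp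
  qed simp
qed

definition centered_second_moment :: "real \<Rightarrow> nat \<Rightarrow> real" where
  "centered_second_moment p n =
     (\<Sum>x\<in>binary_histories n. hist_prob n x * ((\<Sum>i=1..n. x i) - real n * p)\<^sup>2)"

lemma centered_second_moment_Suc:
  "centered_second_moment p (Suc n) =
     (\<Sum>x\<in>binary_histories n. hist_prob n x *
        (((\<Sum>i=1..n. x i) - real n * p + q n x - p)\<^sup>2 + q n x * (1 - q n x)))"
  unfolding centered_second_moment_def sum_hist_prob_Suc sum_fun_upd_Suc
  by (intro sum.cong) (simp_all add: power2_eq_square algebra_simps)

lemma centered_second_moment_Suc_ge:
  "(\<Sum>x\<in>binary_histories n. hist_prob n x * ((\<Sum>i=1..n. x i) - real n * p + q n x - p)\<^sup>2)
     \<le> centered_second_moment p (Suc n)"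
  unfolding centered_second_moment_Suc distrib_left
  using hist_prob_mult_variance_nonneg by (intro sum_mono) auto

definition mean_square_error :: "real \<Rightarrow> nat \<Rightarrow> real" where
  "mean_square_error p n = centered_second_moment p n / (real n)\<^sup>2"

lemma mean_square_error_nonneg: "0 \<le> mean_square_error p n"
  unfolding mean_square_error_def centered_second_moment_def
  by (intro divide_nonneg_nonneg sum_nonneg mult_nonneg_nonneg hist_prob_nonneg) auto

lemma mean_square_error_le_threshold:
  assumes "n \<ge> 1" "0 \<le> p" "p \<le> 1"
  shows "mean_square_error p n
           \<le> \<epsilon>\<^sup>2 + prob {\<omega> \<in> space M. \<bar>pbar r n \<omega> - p\<bar> > \<epsilon>}"
proof -
  define g where "g x = ((\<Sum>i=1..n. x i) - real n * p) / real n" for x :: "nat \<Rightarrow> real"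
  have g_eq: "g x = (\<Sum>i=1..n. x i) / real n - p" for x
    using assms(1) by (simp add: g_def diff_divide_distrib)
  have "mean_square_error p n = (\<Sum>x\<in>binary_histories n. hist_prob n x * (g x)\<^sup>2)"
    by (simp add: mean_square_error_def centered_second_moment_def g_def sum_divide_distrib power_divide)
  also have "\<dots> \<le> \<epsilon>\<^sup>2 + (\<Sum>x\<in>{x \<in> binary_histories n. \<bar>g x\<bar> > \<epsilon>}. hist_prob n x)"
  proof (rule sum_weighted_square_le_threshold)
    show "\<bar>g x\<bar> \<le> 1" if "x \<in> binary_histories n" for x
      using binary_history_mean_bounds[OF that] assms(2,3) by (auto simp: g_eq)
  qed (simp_all add: finite_binary_histories hist_prob_nonneg sum_hist_prob)
  also have "(\<Sum>x\<in>{x \<in> binary_histories n. \<bar>g x\<bar> > \<epsilon>}. hist_prob n x) =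
      prob {\<omega> \<in> space M. \<bar>g (history n \<omega>)\<bar> > \<epsilon>}"
    by (rule prob_history_eq_sum[symmetric])
  also have "{\<omega> \<in> space M. \<bar>g (history n \<omega>)\<bar> > \<epsilon>} = {\<omega> \<in> space M. \<bar>pbar r n \<omega> - p\<bar> > \<epsilon>}"
    by (simp add: g_eq history_def pbar_def)
  finally show ?thesis .
qed

lemma mean_square_error_tendsto_zero_if_consistent:
  assumes "0 \<le> p" "p \<le> 1"
    and consistent: "\<And>\<epsilon>. \<epsilon> > 0 \<Longrightarrow> (\<lambda>n. prob {\<omega> \<in> space M. \<bar>pbar r n \<omega> - p\<bar> > \<epsilon>}) \<longlonglongrightarrow> 0"
  shows "mean_square_error p \<longlonglongrightarrow> 0"
proof (rule order_tendstoI)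
  fix e :: real
  assume "e < 0"
  then show "\<forall>\<^sub>F n in sequentially. e < mean_square_error p n"
    using mean_square_error_nonneg by (intro always_eventually) (simp add: less_le_trans)
next
  fix e :: real
  assume "0 < e"
  then have "\<forall>\<^sub>F n in sequentially. prob {\<omega> \<in> space M. \<bar>pbar r n \<omega> - p\<bar> > sqrt (e / 2)} < e / 2"
    by (intro order_tendstoD(2)[OF consistent]) simp_all
  then show "\<forall>\<^sub>F n in sequentially. mean_square_error p n < e"
    using eventually_ge_at_top[of 1]
  proof eventually_elim
    case (elim n)
    then show ?case
      using mean_square_error_le_threshold[of n p "sqrt (e / 2)"] assms(1,2) \<open>0 < e\<close> by simp
  qed
qed

end

(* For n = 0 the empirical mean is 0 / 0 = 0, so the first draw succeeds with probability lam 1 * p. *)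
locale reinforced_process =
  binary_process M r "\<lambda>n x. lam (Suc n) * p + (1 - lam (Suc n)) * ((\<Sum>i=1..n. x i) / real n)"
  for M :: "'a measure" and r :: "nat \<Rightarrow> 'a \<Rightarrow> real" and lam :: "nat \<Rightarrow> real" and p :: real +
  assumes p_pos: "0 < p" and p_less_one: "p < 1" and lam_1: "lam 1 = 1"
    and lam_bounds: "\<And>n. n \<ge> 1 \<Longrightarrow> 0 \<le> lam n \<and> lam n \<le> 1"
begin

lemma mean_square_error_1: "mean_square_error p 1 = p * (1 - p)"
  using centered_second_moment_Suc[of p 0] lam_1
  by (simp add: mean_square_error_def binary_histories_def hist_prob_def hist_event_def prob_space power2_eq_square algebra_simps)

lemma mean_square_error_Suc_ge:
  assumes "n \<ge> 1"
  shows "(1 - lam (Suc n) / real (Suc n))\<^sup>2 * mean_square_error p n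
           \<le> mean_square_error p (Suc n)"
proof -
  let ?c = "(real n + 1 - lam (Suc n)) / real n"
  have deviation_Suc: "(\<Sum>i=1..n. x i) - real n * p
        + (lam (Suc n) * p + (1 - lam (Suc n)) * ((\<Sum>i=1..n. x i) / real n)) - p
      = ((\<Sum>i=1..n. x i) - real n * p) * ?c" for x
    using assms by (simp add: field_simps)
  have "?c\<^sup>2 * centered_second_moment p n =
      (\<Sum>x\<in>binary_histories n. hist_prob n x * ((\<Sum>i=1..n. x i) - real n * p
        + (lam (Suc n) * p + (1 - lam (Suc n)) * ((\<Sum>i=1..n. x i) / real n)) - p)\<^sup>2)"
    unfolding centered_second_moment_def sum_distrib_left deviation_Suc
    by (intro sum.cong refl) (simp only: power_mult_distrib ac_simps)
  also have "\<dots> \<le> centered_second_moment p (Suc n)"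
    by (rule centered_second_moment_Suc_ge)
  finally have "?c\<^sup>2 * centered_second_moment p n \<le> centered_second_moment p (Suc n)" .
  then have "?c\<^sup>2 * centered_second_moment p n / (real (Suc n))\<^sup>2
      \<le> mean_square_error p (Suc n)"
    unfolding mean_square_error_def by (intro divide_right_mono) auto
  moreover have "(1 - lam (Suc n) / real (Suc n))\<^sup>2 * mean_square_error p n
      = ?c\<^sup>2 * centered_second_moment p n / (real (Suc n))\<^sup>2"
    using assms by (simp add: mean_square_error_def field_simps)
  ultimately show ?thesis
    by simp
qed

lemma mean_square_error_lower_bound:
  assumes "n \<ge> 1"
  shows "p * (1 - p) * exp (-2 * ((\<Sum>k=1..n. (lam k)\<^sup>2) + 2)) \<le> mean_square_error p n"
proof -
  have "mean_square_error p 1 * (\<Prod>k=Suc 1..n. (1 - lam k / real k)\<^sup>2) \<le> mean_square_error p n"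
  proof (rule recurrence_prod_lower_bound[OF _ _ assms])
    show "(1 - lam (Suc k) / real (Suc k))\<^sup>2 * mean_square_error p k \<le> mean_square_error p (Suc k)"
      if "1 \<le> k" for k
      using mean_square_error_Suc_ge[OF that] by simp
  qed simp
  then have prod_bound: "p * (1 - p) * (\<Prod>k=2..n. (1 - lam k / real k)\<^sup>2) \<le> mean_square_error p n"
    using mean_square_error_1 by (simp add: numeral_2_eq_2)
  have "p * (1 - p) * exp (-2 * ((\<Sum>k=1..n. (lam k)\<^sup>2) + 2))
      \<le> p * (1 - p) * (\<Prod>k=2..n. (1 - lam k / real k)\<^sup>2)"
    using exp_sum_squares_le_prod[OF lam_bounds assms] p_pos p_less_one by (intro mult_left_mono) auto
  also have "\<dots> \<le> mean_square_error p n"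
    by (rule prod_bound)
  finally show ?thesis .
qed

lemma sum_squares_lam_diverges_if_mean_square_error_tendsto_zero:
  assumes "mean_square_error p \<longlonglongrightarrow> 0"
  shows "filterlim (\<lambda>n. \<Sum>k=1..n. (lam k)\<^sup>2) at_top sequentially"
  unfolding filterlim_at_top
proof
  fix Z
  have "\<forall>\<^sub>F n in sequentially. mean_square_error p n < p * (1 - p) * exp (-2 * (Z + 2))"
    using assms p_pos p_less_one by (intro order_tendstoD(2)) auto
  then show "\<forall>\<^sub>F n in sequentially. Z \<le> (\<Sum>k=1..n. (lam k)\<^sup>2)"
    using eventually_ge_at_top[of 1]
  proof eventually_elim
    case (elim n)
    then have "p * (1 - p) * exp (-2 * ((\<Sum>k=1..n. (lam k)\<^sup>2) + 2)) < p * (1 - p) * exp (-2 * (Z + 2))"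
      using mean_square_error_lower_bound[of n] by linarith
    then have "exp (-2 * ((\<Sum>k=1..n. (lam k)\<^sup>2) + 2)) < exp (-2 * (Z + 2))"
      using p_pos p_less_one by (simp add: mult_less_cancel_left_pos)
    then show ?case
      by simp
  qed
qed

end

lemma reinforced_processI:
  assumes "prob_space M" "0 < p" "p < 1" "lam 1 = 1"
    and "\<And>n. n \<ge> 1 \<Longrightarrow> 0 \<le> lam n \<and> lam n \<le> 1"
    and "\<And>i. i \<ge> 1 \<Longrightarrow> r i \<in> borel_measurable M"
    and "\<And>i \<omega>. i \<ge> 1 \<Longrightarrow> \<omega> \<in> space M \<Longrightarrow> r i \<omega> \<in> {0, 1}"
    and prob_first: "measure M {\<omega> \<in> space M. r 1 \<omega> = 1} = p"
    and prob_next: "\<And>n x. n \<ge> 2 \<Longrightarrow> (\<forall>i\<in>{1..n-1}. x i \<in> {0, 1}) \<Longrightarrow>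
           measure M (hist_event M r (n - 1) x \<inter> {\<omega> \<in> space M. r n \<omega> = 1})
             = (lam n * p + (1 - lam n) * ((\<Sum>i=1..n-1. x i) / real (n - 1)))
               * measure M (hist_event M r (n - 1) x)"
  shows "reinforced_process M r lam p"
proof (intro reinforced_process.intro binary_process.intro binary_process_axioms.intro
    reinforced_process_axioms.intro)
  fix n x
  assume x: "x \<in> binary_histories n"
  show "measure M (hist_event M r n x \<inter> {\<omega> \<in> space M. r (Suc n) \<omega> = 1}) =
      (lam (Suc n) * p + (1 - lam (Suc n)) * ((\<Sum>i=1..n. x i) / real n)) * measure M (hist_event M r n x)"
  proof (cases "n = 0")
    case True
    then have "hist_event M r n x = space M"
      by (simp add: hist_event_def)
    then show ?thesis
      using True prob_first \<open>lam 1 = 1\<close> prob_space.prob_space[OF \<open>prob_space M\<close>]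
      by (simp add: Int_absorb1)
  next
    case False
    have "\<forall>i\<in>{1..Suc n - 1}. x i \<in> {0, 1}"
      using x by (auto simp: binary_histories_def PiE_iff)
    then show ?thesis
      using prob_next[of "Suc n" x] False by simp
  qed
qed (fact assms(1-7))+

theorem theoremA6:
  fixes M :: "'a measure" and r :: "nat \<Rightarrow> 'a \<Rightarrow> real"
    and lam :: "nat \<Rightarrow> real" and p :: real
  assumes prob_space: "prob_space M"
    and p_pos: "0 < p" and p_less_one: "p < 1"
    and lam_1: "lam 1 = 1"
    and lam_antitone: "\<And>n. n > 1 \<Longrightarrow> 0 \<le> lam n \<and> lam n \<le> lam (n - 1)"
    and measurable_r: "\<And>i. i \<ge> 1 \<Longrightarrow> r i \<in> borel_measurable M"
    and r_binary: "\<And>i \<omega>. i \<ge> 1 \<Longrightarrow> \<omega> \<in> space M \<Longrightarrow> r i \<omega> \<in> {0, 1}"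
    and prob_first: "measure M {\<omega> \<in> space M. r 1 \<omega> = 1} = p"
    and prob_next: "\<And>n x. n \<ge> 2 \<Longrightarrow> (\<forall>i\<in>{1..n-1}. x i \<in> {0, 1}) \<Longrightarrow>
           measure M (hist_event M r (n - 1) x \<inter> {\<omega> \<in> space M. r n \<omega> = 1})
             = (lam n * p + (1 - lam n) * ((\<Sum>i=1..n-1. x i) / real (n - 1)))
               * measure M (hist_event M r (n - 1) x)"
    and consistent: "\<And>\<epsilon>. \<epsilon> > 0 \<Longrightarrow>
           (\<lambda>n. measure M {\<omega> \<in> space M. \<bar>pbar r n \<omega> - p\<bar> > \<epsilon>}) \<longlonglongrightarrow> 0"
  shows "filterlim (\<lambda>n. \<Sum>i=1..n. (lam i)\<^sup>2) at_top sequentially"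
proof -
  have lam_bounds: "0 \<le> lam n \<and> lam n \<le> 1" if "n \<ge> 1" for n
    using antitone_from_one_bounds[OF lam_antitone lam_1 that] .
  interpret reinforced_process M r lam p
    using prob_space p_pos p_less_one lam_1 lam_bounds measurable_r r_binary prob_first prob_next
    by (rule reinforced_processI)
  have "mean_square_error p \<longlonglongrightarrow> 0"
    using p_pos p_less_one by (intro mean_square_error_tendsto_zero_if_consistent consistent) auto
  then show ?thesis
    by (rule sum_squares_lam_diverges_if_mean_square_error_tendsto_zero)
qed

end
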